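(* Let $M$ be a smooth $n$-manifold with a torsion-free linear connection $\nabla$ and a symmetric $(0,2)$-tensor field $c$, and let $\overline\nabla$ be the Levi-Civita connection of the modified Riemannian extension $\overline g_{\nabla,c}$ on $T^{\ast}M$. Then the Schouten–Van Kampen connection $\overline\nabla^{\ast}$ associated to $\overline\nabla$ and adapted to the pair of distributions $(\mathcal H,\mathcal V)$ coincides with the horizontal lift ${}^H\nabla$ of $\nabla$ to $T^{\ast}M$.
   Context: Summation convention; $\overline{i}=n+i$. $\Gamma^h_{ij}$ are the coefficients of $\nabla$ in local coordinates $(x^i)$. On $T^{\ast}M$ use induced coordinates $(x^i,p_i)$, $\partial_{\overline i}=\partial/\partial p_i$, and the adapted frame $E_j=\partial_j+p_a\Gamma^a_{hj}\partial_{\overline h}$, $E_{\overline j}=\partial_{\overline j}$. The horizontal distribution $\mathcal H$ is spanned by the $E_j$ and the vertical distribution $\mathcal V$ by the $E_{\overline j}$; $H$ and $V$ denote the projections of $TT^{\ast}M=\mathcal H\oplus\mathcal V$ onto $\mathcal H$ and $\mathcal V$. The modified Riemannian extension is $\overline{g}_{\nabla,c}(E_i,E_j)=c_{ij}$, $\overline{g}_{\nabla,c}(E_i,E_{\overline j})=\overline{g}_{\nabla,c}(E_{\overline j},E_i)=\delta_i^j$, $\overline{g}_{\nabla,c}(E_{\overline i},E_{\overline j})=0$. The Schouten–Van Kampen connection is $\overline\nabla^{\ast}_XY=H(\overline\nabla_X HY)+V(\overline\nabla_X VY)$. The horizontal lift ${}^H\nabla$ is the linear connection on $T^{\ast}M$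 with ${}^H\nabla_{E_{\overline{i}}}E_{\overline{j}}=0$, ${}^H\nabla_{E_{\overline{i}}}E_{j}=0$, ${}^H\nabla_{E_{i}}E_{\overline{j}}=-\Gamma^{j}_{ih}E_{\overline{h}}$, ${}^H\nabla_{E_{i}}E_{j}=\Gamma^{h}_{ij}E_{h}$. *)

theory Defs
  imports "HOL-Analysis.Analysis"
begin

text \<open>M is an open coordinate domain U of real^'n,
  T*M is U x real^'n with coordinates (x,p). Vectors tangent to T*M are written in
  the coordinate basis (d_i, d_{bar i}) as pairs (a, b) :: real^'n x real^'n.
  Gam x h i j = Gamma^h_{ij}(x); c x i j = c_{ij}(x).\<close>

type_synonym ('n) cpt = "(real^'n) \<times> (real^'n)"

fun Ck_on :: "nat \<Rightarrow> 'a::euclidean_space set \<Rightarrow> ('a \<Rightarrow> 'b::euclidean_space) \<Rightarrow> bool" where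
  "Ck_on 0 W f = continuous_on W f"
| "Ck_on (Suc k) W f = (f differentiable_on W \<and>
      (\<forall>v. Ck_on k W (\<lambda>z. frechet_derivative f (at z) v)))"

definition smooth_on :: "'a::euclidean_space set \<Rightarrow> ('a \<Rightarrow> 'b::euclidean_space) \<Rightarrow> bool" where
  "smooth_on W f \<longleftrightarrow> (\<forall>k. Ck_on k W f)"

text \<open>Adapted frame: E_j = d_j + p_a Gamma^a_{hj} d_{bar h},  E_{bar j} = d_{bar j}.\<close>
definition Eh :: "(real^'n::finite \<Rightarrow> 'n \<Rightarrow> 'n \<Rightarrow> 'n \<Rightarrow> real) \<Rightarrow> 'n \<Rightarrow> 'n cpt \<Rightarrow> 'n cpt" where
  "Eh Gam j z = (axis j 1, (\<chi> h. \<Sum>a\<in>UNIV. snd z $ a * Gam (fst z) a h j))"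

definition Ev :: "'n::finite \<Rightarrow> 'n cpt \<Rightarrow> 'n cpt" where
  "Ev j z = (0, axis j 1)"

text \<open>Components of a tangent vector u at z with respect to the adapted frame:
  u = hcomp^j E_j + vcomp^h E_{bar h}.\<close>
definition hcomp :: "(real^'n::finite \<Rightarrow> 'n \<Rightarrow> 'n \<Rightarrow> 'n \<Rightarrow> real) \<Rightarrow> 'n cpt \<Rightarrow> 'n cpt \<Rightarrow> real^'n" where
  "hcomp Gam z u = fst u"

definition vcomp :: "(real^'n::finite \<Rightarrow> 'n \<Rightarrow> 'n \<Rightarrow> 'n \<Rightarrow> real) \<Rightarrow> 'n cpt \<Rightarrow> 'n cpt \<Rightarrow> real^'n" where
  "vcomp Gam z u = (\<chi> h. snd u $ h -
      (\<Sum>a\<in>UNIV. \<Sum>j\<in>UNIV. snd z $ a * Gam (fst z) a h j * fst u $ j))"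

definition Hproj :: "(real^'n::finite \<Rightarrow> 'n \<Rightarrow> 'n \<Rightarrow> 'n \<Rightarrow> real) \<Rightarrow> 'n cpt \<Rightarrow> 'n cpt \<Rightarrow> 'n cpt" where
  "Hproj Gam z u = (\<Sum>j\<in>UNIV. hcomp Gam z u $ j *\<^sub>R Eh Gam j z)"

definition Vproj :: "(real^'n::finite \<Rightarrow> 'n \<Rightarrow> 'n \<Rightarrow> 'n \<Rightarrow> real) \<Rightarrow> 'n cpt \<Rightarrow> 'n cpt \<Rightarrow> 'n cpt" where
  "Vproj Gam z u = (\<Sum>h\<in>UNIV. vcomp Gam z u $ h *\<^sub>R Ev h z)"

text \<open>Modified Riemannian extension: g(E_i,E_j)=c_ij, g(E_i,E_{bar j})=delta, g(E_{bar i},E_{bar j})=0.\<close>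
definition gbar :: "(real^'n::finite \<Rightarrow> 'n \<Rightarrow> 'n \<Rightarrow> 'n \<Rightarrow> real) \<Rightarrow> (real^'n \<Rightarrow> 'n \<Rightarrow> 'n \<Rightarrow> real)
    \<Rightarrow> 'n cpt \<Rightarrow> 'n cpt \<Rightarrow> 'n cpt \<Rightarrow> real" where
  "gbar Gam c z u v =
     (\<Sum>i\<in>UNIV. \<Sum>j\<in>UNIV. c (fst z) i j * hcomp Gam z u $ i * hcomp Gam z v $ j)
     + (\<Sum>i\<in>UNIV. hcomp Gam z u $ i * vcomp Gam z v $ i)
     + (\<Sum>i\<in>UNIV. vcomp Gam z u $ i * hcomp Gam z v $ i)"

text \<open>A linear connection on an open coordinate domain W, given by its
  Christoffel form Lam (bilinear at each point, smooth in the point):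
  nabla_X Y = dY(X) + Lam(X,Y).\<close>
definition conn :: "('a::euclidean_space \<Rightarrow> 'a \<Rightarrow> 'a \<Rightarrow> 'a) \<Rightarrow> ('a \<Rightarrow> 'a) \<Rightarrow> ('a \<Rightarrow> 'a) \<Rightarrow> 'a \<Rightarrow> 'a" where
  "conn Lam X Y z = frechet_derivative Y (at z) (X z) + Lam z (X z) (Y z)"

definition lin_conn :: "'a::euclidean_space set \<Rightarrow> ('a \<Rightarrow> 'a \<Rightarrow> 'a \<Rightarrow> 'a) \<Rightarrow> bool" where
  "lin_conn W Lam \<longleftrightarrow> (\<forall>z\<in>W. bilinear (Lam z)) \<and> (\<forall>u v. smooth_on W (\<lambda>z. Lam z u v))"

definition lie :: "('a::euclidean_space \<Rightarrow> 'a) \<Rightarrow> ('a \<Rightarrow> 'a) \<Rightarrow> 'a \<Rightarrow> 'a" where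
  "lie X Y z = frechet_derivative Y (at z) (X z) - frechet_derivative X (at z) (Y z)"

definition torsion_free_conn :: "'a::euclidean_space set \<Rightarrow> ('a \<Rightarrow> 'a \<Rightarrow> 'a \<Rightarrow> 'a) \<Rightarrow> bool" where
  "torsion_free_conn W Lam \<longleftrightarrow> (\<forall>X Y. smooth_on W X \<longrightarrow> smooth_on W Y \<longrightarrow>
     (\<forall>z\<in>W. conn Lam X Y z - conn Lam Y X z = lie X Y z))"

definition metric_conn :: "'a::euclidean_space set \<Rightarrow> ('a \<Rightarrow> 'a \<Rightarrow> 'a \<Rightarrow> real) \<Rightarrow> ('a \<Rightarrow> 'a \<Rightarrow> 'a \<Rightarrow> 'a) \<Rightarrow> bool" where
  "metric_conn W g Lam \<longleftrightarrow> (\<forall>X Y Z. smooth_on W X \<longrightarrow> smooth_on W Y \<longrightarrow> smooth_on W Z \<longrightarrow>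
     (\<forall>z\<in>W. frechet_derivative (\<lambda>w. g w (Y w) (Z w)) (at z) (X z)
            = g z (conn Lam X Y z) (Z z) + g z (Y z) (conn Lam X Z z)))"

definition levi_civita :: "'a::euclidean_space set \<Rightarrow> ('a \<Rightarrow> 'a \<Rightarrow> 'a \<Rightarrow> real) \<Rightarrow> ('a \<Rightarrow> 'a \<Rightarrow> 'a \<Rightarrow> 'a) \<Rightarrow> bool" where
  "levi_civita W g Lam \<longleftrightarrow> lin_conn W Lam \<and> torsion_free_conn W Lam \<and> metric_conn W g Lam"

definition svk :: "(real^'n::finite \<Rightarrow> 'n \<Rightarrow> 'n \<Rightarrow> 'n \<Rightarrow> real) \<Rightarrow> ('n cpt \<Rightarrow> 'n cpt \<Rightarrow> 'n cpt \<Rightarrow> 'n cpt)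
    \<Rightarrow> ('n cpt \<Rightarrow> 'n cpt) \<Rightarrow> ('n cpt \<Rightarrow> 'n cpt) \<Rightarrow> 'n cpt \<Rightarrow> 'n cpt" where
  "svk Gam Lam X Y z =
     Hproj Gam z (conn Lam X (\<lambda>w. Hproj Gam w (Y w)) z)
   + Vproj Gam z (conn Lam X (\<lambda>w. Vproj Gam w (Y w)) z)"

definition horizontal_lift :: "'n cpt set \<Rightarrow> (real^'n::finite \<Rightarrow> 'n \<Rightarrow> 'n \<Rightarrow> 'n \<Rightarrow> real)
    \<Rightarrow> ('n cpt \<Rightarrow> 'n cpt \<Rightarrow> 'n cpt \<Rightarrow> 'n cpt) \<Rightarrow> bool" where
  "horizontal_lift W Gam Lam \<longleftrightarrow> lin_conn W Lam \<and>
     (\<forall>i j. \<forall>z\<in>W.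
        conn Lam (Ev i) (Ev j) z = 0
      \<and> conn Lam (Ev i) (Eh Gam j) z = 0
      \<and> conn Lam (Eh Gam i) (Ev j) z = - (\<Sum>h\<in>UNIV. Gam (fst z) j i h *\<^sub>R Ev h z)
      \<and> conn Lam (Eh Gam i) (Eh Gam j) z = (\<Sum>h\<in>UNIV. Gam (fst z) h i j *\<^sub>R Eh Gam h z))"

end

theory Submission
  imports Defs
begin

(* The Schouten-Van Kampen connection of any linear connection Lam is again a linear connection:
   as H and V are complementary projections, svk X Y differs from the flat derivative dY(X) by the
   tensor H (Lam(X, HY)) + V (Lam(X, VY)) - (dH)(X) Y.  Two linear connections that agree on a
   frame agree everywhere, so it suffices to evaluate the Schouten-Van Kampen connection of the
   Levi-Civita connection on the adapted frame (E_j, E_{bar j}) and to compare with the values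
   defining the horizontal lift.  These evaluations need only the horizontal part of the
   Levi-Civita connection and its values on vertical vectors.  In the Koszul formula both involve
   only derivatives of g_{nabla,c} along the fibres, where the metric is affine in p with slope
   given by the Christoffel symbols of nabla; in particular c drops out. *)

lemma Ck_on_const: "Ck_on k W (\<lambda>_. a)"
  by (induction k arbitrary: a) auto

lemma smooth_on_const: "smooth_on W (\<lambda>_. a)"
  by (simp add: smooth_on_def Ck_on_const)

lemma smooth_on_imp_differentiable:
  "smooth_on W f \<Longrightarrow> open W \<Longrightarrow> z \<in> W \<Longrightarrow> f differentiable (at z)"
  unfolding smooth_on_def by (metis Ck_on.simps(2) differentiable_on_eq_differentiable_at)

lemma frechet_derivative_along_affine_line:
  fixes f :: "'a::real_normed_vector \<Rightarrow> real"
  assumes "f differentiable (at z)" and line: "\<And>t. f (z + t *\<^sub>R v) = a + t * b"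
  shows "frechet_derivative f (at z) v = b"
proof -
  let ?D = "frechet_derivative f (at z)"
  have "((\<lambda>t::real. z + t *\<^sub>R v) has_derivative (\<lambda>t. t *\<^sub>R v)) (at 0)"
    by (auto intro!: derivative_eq_intros)
  moreover have "(f has_derivative ?D) (at z)"
    using assms(1) frechet_derivative_works by blast
  then have "(f has_derivative ?D) (at (z + 0 *\<^sub>R v))"
    by simp
  ultimately have "((\<lambda>t. f (z + t *\<^sub>R v)) has_derivative (\<lambda>t. ?D (t *\<^sub>R v))) (at 0)"
    using diff_chain_at by (fastforce simp: o_def)
  then have "((\<lambda>t. a + t * b) has_derivative (\<lambda>t. ?D (t *\<^sub>R v))) (at 0)"
    by (simp add: line)
  moreover have "((\<lambda>t::real. a + t * b) has_derivative (\<lambda>t. t * b)) (at 0)"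
    by (auto intro!: derivative_eq_intros)
  ultimately have "(\<lambda>t. ?D (t *\<^sub>R v)) = (\<lambda>t. t * b)"
    by (rule has_derivative_unique)
  from fun_cong[OF this, of 1] show ?thesis by simp
qed

lemma bilinear_sum_scaleR:
  assumes "bilinear h"
  shows "h (\<Sum>i\<in>I. s i *\<^sub>R e i) (\<Sum>j\<in>J. t j *\<^sub>R f j)
       = (\<Sum>i\<in>I. \<Sum>j\<in>J. (s i * t j) *\<^sub>R h (e i) (f j))"
proof -
  from assms have l: "\<And>y. linear (\<lambda>x. h x y)" and r: "\<And>x. linear (h x)"
    by (simp_all add: bilinear_def)
  show ?thesis
    by (simp add: linear_sum[OF l] linear_scale[OF l] linear_sum[OF r] linear_scale[OF r]
        scaleR_sum_right mult.commute)
      (subst sum.swap, simp)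
qed

lemma sum_axis_times [simp]: "(\<Sum>i\<in>UNIV. axis k (1::real) $ i * f i) = f k"
  by (simp add: axis_def if_distrib[of "\<lambda>x. x * _"] cong del: if_weak_cong)

lemma sum_times_axis [simp]: "(\<Sum>i\<in>UNIV. f i * axis k (1::real) $ i) = f k"
  by (simp add: axis_def if_distrib[of "\<lambda>x. _ * x"] cong del: if_weak_cong)

lemma vec_lambda_eq_sum_axis: "(\<chi> h. f h) = (\<Sum>h\<in>UNIV. f h *\<^sub>R axis h (1::real))"
  by (simp add: vec_eq_iff axis_def if_distrib sum.If_cases cong del: if_weak_cong)

lemma conn_eq_derivative_plus_form:
  "(Y has_derivative DY) (at z) \<Longrightarrow> conn Lam X Y z = DY (X z) + Lam z (X z) (Y z)"
  by (simp add: conn_def frechet_derivative_at[symmetric])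

section \<open>The adapted frame and the projections H and V\<close>

definition pGam :: "(real^'n::finite \<Rightarrow> 'n \<Rightarrow> 'n \<Rightarrow> 'n \<Rightarrow> real) \<Rightarrow> 'n cpt \<Rightarrow> 'n \<Rightarrow> 'n \<Rightarrow> real" where
  "pGam Gam w h j = (\<Sum>a\<in>UNIV. snd w $ a * Gam (fst w) a h j)"

lemma Eh_eq: "Eh Gam j w = (axis j 1, \<chi> h. pGam Gam w h j)"
  by (simp add: Eh_def pGam_def)

lemma fst_Eh [simp]: "fst (Eh Gam j w) = axis j 1"
  by (simp add: Eh_def)

lemma fst_Ev [simp]: "fst (Ev j w) = 0"
  by (simp add: Ev_def)

lemma Hproj_eq: "Hproj Gam w u = (fst u, \<chi> h. \<Sum>j\<in>UNIV. fst u $ j * pGam Gam w h j)"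
  unfolding Hproj_def hcomp_def Eh_eq
  by (simp add: prod_eq_iff fst_sum snd_sum vec_eq_iff axis_def if_distrib sum.If_cases
      cong del: if_weak_cong)

lemma vcomp_eq: "vcomp Gam w u = (\<chi> h. snd u $ h - (\<Sum>j\<in>UNIV. fst u $ j * pGam Gam w h j))"
  unfolding vcomp_def pGam_def
  by (simp add: vec_eq_iff sum_distrib_left algebra_simps; subst sum.swap; simp add: algebra_simps)

lemma Vproj_eq: "Vproj Gam w u = (0, vcomp Gam w u)"
  unfolding Vproj_def Ev_def
  by (simp add: prod_eq_iff fst_sum snd_sum vec_eq_iff axis_def if_distrib sum.If_cases
      cong del: if_weak_cong)

lemma Hproj_add_Vproj: "Hproj Gam w u + Vproj Gam w u = u"
  by (simp add: Hproj_eq Vproj_eq vcomp_eq prod_eq_iff vec_eq_iff)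

lemma adapted_frame_expansion:
  "u = (\<Sum>i\<in>UNIV. fst u $ i *\<^sub>R Eh Gam i w) + (\<Sum>h\<in>UNIV. vcomp Gam w u $ h *\<^sub>R Ev h w)"
  using Hproj_add_Vproj[of Gam w u] unfolding Hproj_def Vproj_def hcomp_def by simp

lemma linear_Hproj: "linear (Hproj Gam w)"
  by (rule linearI)
    (simp_all add: Hproj_eq vec_eq_iff sum.distrib algebra_simps sum_distrib_left)

lemma linear_Vproj: "linear (Vproj Gam w)"
  by (rule linearI)
    (simp_all add: Vproj_eq vcomp_eq vec_eq_iff sum.distrib algebra_simps sum_distrib_left)

lemma Hproj_Hproj: "Hproj Gam w (Hproj Gam w u) = Hproj Gam w u"
  by (simp add: Hproj_eq)

lemma Vproj_Hproj: "Vproj Gam w (Hproj Gam w u) = 0"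
  by (simp add: Vproj_eq vcomp_eq Hproj_eq prod_eq_iff vec_eq_iff)

lemma Hproj_vertical: "fst u = 0 \<Longrightarrow> Hproj Gam w u = 0"
  by (simp add: Hproj_eq prod_eq_iff vec_eq_iff)

lemma Vproj_vertical: "fst u = 0 \<Longrightarrow> Vproj Gam w u = u"
  by (simp add: Vproj_eq vcomp_eq prod_eq_iff vec_eq_iff)

lemma Hproj_Eh: "Hproj Gam w (Eh Gam j w) = Eh Gam j w"
  by (simp add: Hproj_eq Eh_eq prod_eq_iff vec_eq_iff)

lemma Vproj_Eh: "Vproj Gam w (Eh Gam j w) = 0"
  using Hproj_add_Vproj[of Gam w "Eh Gam j w"] by (simp add: Hproj_Eh)

lemma Hproj_Ev: "Hproj Gam w (Ev j w) = 0"
  by (simp add: Hproj_vertical Ev_def)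

lemma Vproj_Ev: "Vproj Gam w (Ev j w) = Ev j w"
  by (simp add: Vproj_vertical Ev_def)

lemma has_derivative_vec_nth:
  "(f has_derivative f') F \<Longrightarrow> ((\<lambda>x. f x $ i) has_derivative (\<lambda>x. f' x $ i)) F"
  using bounded_linear.has_derivative[OF bounded_linear_vec_nth] by blast

lemma has_derivative_vec_lambda:
  fixes f f' :: "_ \<Rightarrow> 'n::finite \<Rightarrow> real"
  assumes "\<And>h. ((\<lambda>w. f w h) has_derivative (\<lambda>v. f' v h)) F"
  shows "((\<lambda>w. \<chi> h. f w h) has_derivative (\<lambda>v. \<chi> h. f' v h)) F"
proof -
  have "((\<lambda>w. \<Sum>h\<in>UNIV. f w h *\<^sub>R axis h (1::real))
      has_derivative (\<lambda>v. \<Sum>h\<in>UNIV. f' v h *\<^sub>R axis h (1::real))) F"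
    by (intro has_derivative_sum has_derivative_scaleR_left assms)
  then show ?thesis
    by (simp only: vec_lambda_eq_sum_axis)
qed

definition pGam_deriv ::
    "(real^'n::finite \<Rightarrow> 'n \<Rightarrow> 'n \<Rightarrow> 'n \<Rightarrow> real) \<Rightarrow> 'n cpt \<Rightarrow> 'n \<Rightarrow> 'n \<Rightarrow> 'n cpt \<Rightarrow> real" where
  "pGam_deriv Gam z h j v = (\<Sum>a\<in>UNIV. snd v $ a * Gam (fst z) a h j
      + snd z $ a * frechet_derivative (\<lambda>x. Gam x a h j) (at (fst z)) (fst v))"

lemma has_derivative_pGam:
  assumes "\<And>a h j. (\<lambda>x. Gam x a h j) differentiable (at (fst z))"
  shows "((\<lambda>w. pGam Gam w h j) has_derivative pGam_deriv Gam z h j) (at z)"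
proof -
  have Gam: "((\<lambda>w. Gam (fst w) a h j) has_derivative
      (\<lambda>v. frechet_derivative (\<lambda>x. Gam x a h j) (at (fst z)) (fst v))) (at z)" for a
    using diff_chain_at[OF has_derivative_fst[OF has_derivative_ident],
        OF assms[of a h j, unfolded frechet_derivative_works]]
    by (simp add: o_def)
  have p: "((\<lambda>w. snd w $ a) has_derivative (\<lambda>v. snd v $ a)) (at z)" for a
    by (intro has_derivative_vec_nth has_derivative_snd has_derivative_ident)
  show ?thesis
    unfolding pGam_def pGam_deriv_def[abs_def]
    by (intro has_derivative_sum has_derivative_mult[OF p Gam, THEN has_derivative_eq_rhs])
      (simp add: algebra_simps)
qed

lemma linear_pGam_deriv:
  "(\<And>a h j. (\<lambda>x. Gam x a h j) differentiable (at (fst z))) \<Longrightarrow> linear (pGam_deriv Gam z h j)"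
  using has_derivative_pGam has_derivative_linear by blast

definition Hproj_deriv ::
    "(real^'n::finite \<Rightarrow> 'n \<Rightarrow> 'n \<Rightarrow> 'n \<Rightarrow> real) \<Rightarrow> 'n cpt \<Rightarrow> 'n cpt \<Rightarrow> 'n cpt \<Rightarrow> 'n cpt" where
  "Hproj_deriv Gam z u v = (0, \<chi> h. \<Sum>j\<in>UNIV. fst v $ j * pGam_deriv Gam z h j u)"

lemma has_derivative_Hproj_field:
  assumes "\<And>a h j. (\<lambda>x. Gam x a h j) differentiable (at (fst z))"
    and Y: "(Y has_derivative DY) (at z)"
  shows "((\<lambda>w. Hproj Gam w (Y w)) has_derivative
      (\<lambda>u. Hproj Gam z (DY u) + Hproj_deriv Gam z u (Y z))) (at z)"
proof -
  have Y1: "((\<lambda>w. fst (Y w) $ j) has_derivative (\<lambda>v. fst (DY v) $ j)) (at z)" for j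
    by (intro has_derivative_vec_nth has_derivative_fst Y)
  have "((\<lambda>w. (fst (Y w), \<chi> h. \<Sum>j\<in>UNIV. fst (Y w) $ j * pGam Gam w h j)) has_derivative
      (\<lambda>u. (fst (DY u), \<chi> h. \<Sum>j\<in>UNIV.
          fst (Y z) $ j * pGam_deriv Gam z h j u + fst (DY u) $ j * pGam Gam z h j))) (at z)"
    by (intro has_derivative_Pair has_derivative_fst Y has_derivative_vec_lambda has_derivative_sum
        has_derivative_mult Y1 has_derivative_pGam assms(1))
  also have "(\<lambda>u. (fst (DY u), \<chi> h. \<Sum>j\<in>UNIV.
          fst (Y z) $ j * pGam_deriv Gam z h j u + fst (DY u) $ j * pGam Gam z h j))
      = (\<lambda>u. Hproj Gam z (DY u) + Hproj_deriv Gam z u (Y z))"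
    by (simp add: fun_eq_iff Hproj_eq Hproj_deriv_def vec_eq_iff sum.distrib)
  finally have "((\<lambda>w. (fst (Y w), \<chi> h. \<Sum>j\<in>UNIV. fst (Y w) $ j * pGam Gam w h j)) has_derivative
      (\<lambda>u. Hproj Gam z (DY u) + Hproj_deriv Gam z u (Y z))) (at z)" .
  then show ?thesis
    by (simp only: Hproj_eq)
qed

lemma has_derivative_Eh:
  assumes "\<And>a h j. (\<lambda>x. Gam x a h j) differentiable (at (fst z))"
  shows "(Eh Gam j has_derivative (\<lambda>u. Hproj_deriv Gam z u (axis j 1, 0))) (at z)"
proof -
  have "Eh Gam j = (\<lambda>w. Hproj Gam w (axis j 1, 0))"
    by (simp add: fun_eq_iff Hproj_eq Eh_eq vec_eq_iff)
  moreover have "Hproj Gam z 0 = 0"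
    by (simp add: Hproj_vertical)
  ultimately show ?thesis
    using has_derivative_Hproj_field[of Gam z, OF assms has_derivative_const[of "(axis j 1, 0)"]]
    by simp
qed

lemma has_derivative_Ev: "(Ev j has_derivative (\<lambda>_. 0)) (at z)"
  by (simp add: Ev_def[abs_def])

lemma bilinear_Hproj_deriv:
  assumes "\<And>a h j. (\<lambda>x. Gam x a h j) differentiable (at (fst z))"
  shows "bilinear (Hproj_deriv Gam z)"
proof -
  have l: "linear (pGam_deriv Gam z h j)" for h j
    using assms by (rule linear_pGam_deriv)
  have "linear (Hproj_deriv Gam z u)" for u
    by (rule linearI)
      (simp_all add: Hproj_deriv_def vec_eq_iff distrib_right sum.distrib sum_distrib_left
        mult.assoc)
  moreover have "linear (\<lambda>u. Hproj_deriv Gam z u v)" for v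
    by (rule linearI)
      (simp_all add: Hproj_deriv_def vec_eq_iff linear_add[OF l] linear_scale[OF l]
        distrib_left sum.distrib sum_distrib_left mult.left_commute)
  ultimately show ?thesis
    by (simp add: bilinear_def)
qed

section \<open>The Schouten-Van Kampen connection as a linear connection\<close>

definition svk_form ::
    "(real^'n::finite \<Rightarrow> 'n \<Rightarrow> 'n \<Rightarrow> 'n \<Rightarrow> real) \<Rightarrow> ('n cpt \<Rightarrow> 'n cpt \<Rightarrow> 'n cpt \<Rightarrow> 'n cpt)
      \<Rightarrow> 'n cpt \<Rightarrow> 'n cpt \<Rightarrow> 'n cpt \<Rightarrow> 'n cpt" where
  "svk_form Gam Lam z u v = Hproj Gam z (Lam z u (Hproj Gam z v))
     + Vproj Gam z (Lam z u (Vproj Gam z v)) - Hproj_deriv Gam z u v"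

lemma svk_eq_derivative_plus_svk_form:
  assumes "\<And>a h j. (\<lambda>x. Gam x a h j) differentiable (at (fst z))"
    and Y: "(Y has_derivative DY) (at z)"
  shows "svk Gam Lam X Y z = DY (X z) + svk_form Gam Lam z (X z) (Y z)"
proof -
  let ?H = "Hproj Gam z" and ?V = "Vproj Gam z" and ?dH = "Hproj_deriv Gam z (X z) (Y z)"
  have dH: "((\<lambda>w. Hproj Gam w (Y w)) has_derivative
      (\<lambda>u. ?H (DY u) + Hproj_deriv Gam z u (Y z))) (at z)"
    using assms by (rule has_derivative_Hproj_field)
  have "(\<lambda>w. Vproj Gam w (Y w)) = (\<lambda>w. Y w - Hproj Gam w (Y w))"
    by (simp add: fun_eq_iff eq_diff_eq add.commute Hproj_add_Vproj)
  then have dV: "((\<lambda>w. Vproj Gam w (Y w)) has_derivative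
      (\<lambda>u. DY u - (?H (DY u) + Hproj_deriv Gam z u (Y z)))) (at z)"
    using has_derivative_diff[OF Y dH] by simp
  have vertical: "fst ?dH = 0"
    by (simp add: Hproj_deriv_def)
  have "svk Gam Lam X Y z
      = ?H (?H (DY (X z)) + ?dH + Lam z (X z) (?H (Y z)))
        + ?V (DY (X z) - (?H (DY (X z)) + ?dH) + Lam z (X z) (?V (Y z)))"
    unfolding svk_def conn_eq_derivative_plus_form[OF dH] conn_eq_derivative_plus_form[OF dV] ..
  also have "\<dots> = ?H (DY (X z)) + ?V (DY (X z)) - ?dH
      + ?H (Lam z (X z) (?H (Y z))) + ?V (Lam z (X z) (?V (Y z)))"
    by (simp add: linear_add[OF linear_Hproj] linear_add[OF linear_Vproj]
        linear_diff[OF linear_Vproj] Hproj_Hproj Vproj_Hproj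
        Hproj_vertical[OF vertical] Vproj_vertical[OF vertical])
  also have "\<dots> = DY (X z) + svk_form Gam Lam z (X z) (Y z)"
    by (simp add: Hproj_add_Vproj svk_form_def)
  finally show ?thesis .
qed

lemma bilinear_svk_form:
  assumes "\<And>a h j. (\<lambda>x. Gam x a h j) differentiable (at (fst z))" and "bilinear (Lam z)"
  shows "bilinear (svk_form Gam Lam z)"
proof -
  have Lam: "linear (Lam z u)" "linear (\<lambda>u. Lam z u v)" for u v
    using assms(2) unfolding bilinear_def by blast+
  have dH: "linear (Hproj_deriv Gam z u)" "linear (\<lambda>u. Hproj_deriv Gam z u v)" for u v
    using bilinear_Hproj_deriv[of Gam z, OF assms(1)] unfolding bilinear_def by blast+
  note H = linear_Hproj[of Gam z] and V = linear_Vproj[of Gam z]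
  have "linear (svk_form Gam Lam z u)" for u
    unfolding svk_form_def
    by (intro linear_compose_sub linear_compose_add dH
        linear_compose[OF linear_compose[OF H Lam(1)] H, unfolded o_def]
        linear_compose[OF linear_compose[OF V Lam(1)] V, unfolded o_def])
  moreover have "linear (\<lambda>u. svk_form Gam Lam z u v)" for v
    unfolding svk_form_def
    by (intro linear_compose_sub linear_compose_add dH
        linear_compose[OF Lam(2) H, unfolded o_def] linear_compose[OF Lam(2) V, unfolded o_def])
  ultimately show ?thesis
    by (simp add: bilinear_def)
qed

definition adapted_frame ::
    "(real^'n::finite \<Rightarrow> 'n \<Rightarrow> 'n \<Rightarrow> 'n \<Rightarrow> real) \<Rightarrow> ('n cpt \<Rightarrow> 'n cpt) set" where
  "adapted_frame Gam = range (Eh Gam) \<union> range Ev"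

lemma bilinear_eq_on_adapted_frame:
  assumes B: "bilinear B" and B': "bilinear B'"
    and frame: "\<And>F G. F \<in> adapted_frame Gam \<Longrightarrow> G \<in> adapted_frame Gam \<Longrightarrow>
        B (F z) (G z) = B' (F z) (G z)"
  shows "B u v = B' u v"
proof -
  have "B (Eh Gam i z) (Eh Gam j z) = B' (Eh Gam i z) (Eh Gam j z)"
    and "B (Eh Gam i z) (Ev j z) = B' (Eh Gam i z) (Ev j z)"
    and "B (Ev i z) (Eh Gam j z) = B' (Ev i z) (Eh Gam j z)"
    and "B (Ev i z) (Ev j z) = B' (Ev i z) (Ev j z)" for i j
    by (simp_all add: frame adapted_frame_def)
  then have "B ((\<Sum>i\<in>UNIV. s i *\<^sub>R Eh Gam i z) + (\<Sum>i\<in>UNIV. t i *\<^sub>R Ev i z))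
              ((\<Sum>j\<in>UNIV. s' j *\<^sub>R Eh Gam j z) + (\<Sum>j\<in>UNIV. t' j *\<^sub>R Ev j z))
      = B' ((\<Sum>i\<in>UNIV. s i *\<^sub>R Eh Gam i z) + (\<Sum>i\<in>UNIV. t i *\<^sub>R Ev i z))
              ((\<Sum>j\<in>UNIV. s' j *\<^sub>R Eh Gam j z) + (\<Sum>j\<in>UNIV. t' j *\<^sub>R Ev j z))" for s t s' t'
    by (simp only: bilinear_ladd[OF B] bilinear_radd[OF B] bilinear_sum_scaleR[OF B]
        bilinear_ladd[OF B'] bilinear_radd[OF B'] bilinear_sum_scaleR[OF B'])
  from this[of "\<lambda>i. fst u $ i" "\<lambda>i. vcomp Gam z u $ i" "\<lambda>j. fst v $ j" "\<lambda>j. vcomp Gam z v $ j"]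
  show ?thesis
    by (simp only: adapted_frame_expansion[symmetric])
qed

lemma svk_eq_conn_of_adapted_frame:
  assumes Gam: "\<And>a h j. (\<lambda>x. Gam x a h j) differentiable (at (fst z))"
    and Lam: "bilinear (Lam z)" and K: "bilinear (K z)"
    and frame: "\<And>F G. F \<in> adapted_frame Gam \<Longrightarrow> G \<in> adapted_frame Gam \<Longrightarrow>
        svk Gam Lam F G z = conn K F G z"
    and Y: "(Y has_derivative DY) (at z)"
  shows "svk Gam Lam X Y z = conn K X Y z"
proof -
  have "svk_form Gam Lam z u v = K z u v" for u v
  proof (rule bilinear_eq_on_adapted_frame[OF _ K])
    show "bilinear (svk_form Gam Lam z)"
      using Gam Lam by (rule bilinear_svk_form)
  next
    fix F G
    assume F: "F \<in> adapted_frame Gam" and G: "G \<in> adapted_frame Gam"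
    then obtain DG where DG: "(G has_derivative DG) (at z)"
      using has_derivative_Eh[of Gam z, OF Gam] has_derivative_Ev
      unfolding adapted_frame_def by blast
    show "svk_form Gam Lam z (F z) (G z) = K z (F z) (G z)"
      using frame[OF F G]
      unfolding svk_eq_derivative_plus_svk_form[OF Gam DG] conn_eq_derivative_plus_form[OF DG]
      by simp
  qed
  then show ?thesis
    unfolding svk_eq_derivative_plus_svk_form[OF Gam Y] conn_eq_derivative_plus_form[OF Y]
    by simp
qed

section \<open>The Levi-Civita connection of the modified Riemannian extension\<close>

lemma torsion_free_conn_symmetric:
  assumes "torsion_free_conn W Lam" and "z \<in> W"
  shows "Lam z u v = Lam z v u"
proof -
  have "conn Lam (\<lambda>_. u) (\<lambda>_. v) z - conn Lam (\<lambda>_. v) (\<lambda>_. u) z = lie (\<lambda>_. u) (\<lambda>_. v) z"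
    using assms smooth_on_const unfolding torsion_free_conn_def by blast
  then show ?thesis by (simp add: conn_def lie_def)
qed

lemma metric_conn_constant_fields:
  assumes "metric_conn W g Lam" and "z \<in> W"
  shows "frechet_derivative (\<lambda>y. g y v w) (at z) u = g z (Lam z u v) w + g z v (Lam z u w)"
proof -
  have "frechet_derivative (\<lambda>y. g y ((\<lambda>_. v) y) ((\<lambda>_. w) y)) (at z) ((\<lambda>_. u) z)
      = g z (conn Lam (\<lambda>_. u) (\<lambda>_. v) z) ((\<lambda>_. w) z)
        + g z ((\<lambda>_. v) z) (conn Lam (\<lambda>_. u) (\<lambda>_. w) z)"
    using assms smooth_on_const unfolding metric_conn_def by blast
  then show ?thesis by (simp add: conn_def)
qed

lemma levi_civita_koszul:
  assumes "levi_civita W g Lam" and "z \<in> W" and g_sym: "\<And>u v. g z u v = g z v u"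
  shows "2 * g z (Lam z u v) w
    = frechet_derivative (\<lambda>y. g y v w) (at z) u + frechet_derivative (\<lambda>y. g y u w) (at z) v
      - frechet_derivative (\<lambda>y. g y u v) (at z) w"
proof -
  have sym: "Lam z x y = Lam z y x" for x y
    using assms(1,2) torsion_free_conn_symmetric unfolding levi_civita_def by blast
  have metric: "frechet_derivative (\<lambda>y. g y b c) (at z) a = g z (Lam z a b) c + g z b (Lam z a c)"
    for a b c
    using assms(1,2) metric_conn_constant_fields unfolding levi_civita_def by blast
  show ?thesis
    unfolding metric by (simp add: sym[of v u] sym[of w u] sym[of w v] g_sym[of v])
qed

lemma gbar_symmetric:
  assumes "\<And>i j. c (fst z) i j = c (fst z) j i"
  shows "gbar Gam c z u v = gbar Gam c z v u"
proof -
  have "(\<Sum>i\<in>UNIV. \<Sum>j\<in>UNIV. c (fst z) i j * hcomp Gam z u $ i * hcomp Gam z v $ j)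
      = (\<Sum>i\<in>UNIV. \<Sum>j\<in>UNIV. c (fst z) i j * hcomp Gam z v $ i * hcomp Gam z u $ j)"
    by (subst sum.swap) (simp add: assms algebra_simps)
  then show ?thesis
    unfolding gbar_def by (simp add: algebra_simps)
qed

lemma gbar_horizontal_vertical: "fst v = 0 \<Longrightarrow> gbar Gam c z u v = (\<Sum>i\<in>UNIV. fst u $ i * snd v $ i)"
  by (simp add: gbar_def hcomp_def vcomp_def)

lemma gbar_vertical_horizontal: "fst u = 0 \<Longrightarrow> gbar Gam c z u v = (\<Sum>i\<in>UNIV. snd u $ i * fst v $ i)"
  by (simp add: gbar_def hcomp_def vcomp_def)

lemma frechet_derivative_gbar_vertical_arg:
  assumes "fst u = 0 \<or> fst v = 0"
  shows "frechet_derivative (\<lambda>w. gbar Gam c w u v) (at z) = (\<lambda>_. 0)"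
  using assms by (auto simp: gbar_horizontal_vertical gbar_vertical_horizontal)

lemma differentiable_gbar:
  assumes "\<And>a h j. (\<lambda>x. Gam x a h j) differentiable (at (fst z))"
    and "\<And>i j. (\<lambda>x. c x i j) differentiable (at (fst z))"
  shows "(\<lambda>w. gbar Gam c w u v) differentiable (at z)"
proof -
  have fst_comp: "(\<lambda>w. f (fst w)) differentiable (at z)"
    if "f differentiable (at (fst z))" for f :: "_ \<Rightarrow> real"
    using differentiable_chain_at[OF bounded_linear_imp_differentiable[OF bounded_linear_fst] that]
    by (simp add: o_def)
  have p: "(\<lambda>w. snd w $ a) differentiable (at z)" for a
    using has_derivative_vec_nth[OF has_derivative_snd[OF has_derivative_ident]]
    by (rule differentiableI)
  show ?thesis
    unfolding gbar_def hcomp_def vcomp_def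
    by (simp add: fst_comp[OF assms(1)] fst_comp[OF assms(2)] p
        differentiable_sum differentiable_mult differentiable_add differentiable_diff)
qed

lemma gbar_along_vertical_line:
  fixes z :: "'n::finite cpt"
  assumes Gam_sym: "\<And>a i j. Gam (fst z) a i j = Gam (fst z) a j i"
  shows "gbar Gam c (z + t *\<^sub>R (0, b)) u v = gbar Gam c z u v
    + t * (- 2 * (\<Sum>a\<in>UNIV. b $ a * (\<Sum>i\<in>UNIV. \<Sum>j\<in>UNIV. Gam (fst z) a i j * fst u $ i * fst v $ j)))"
proof -
  define dvcomp where
    "dvcomp (x :: 'n cpt) = (\<chi> i. \<Sum>a\<in>UNIV. \<Sum>j\<in>UNIV. b $ a * Gam (fst z) a i j * fst x $ j)" for x
  define Q where
    "Q = (\<Sum>a\<in>UNIV. b $ a * (\<Sum>i\<in>UNIV. \<Sum>j\<in>UNIV. Gam (fst z) a i j * fst u $ i * fst v $ j))"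
  have vcomp_line: "vcomp Gam (z + t *\<^sub>R (0, b)) x = vcomp Gam z x - t *\<^sub>R dvcomp x" for x
    by (simp add: vcomp_def dvcomp_def vec_eq_iff algebra_simps sum.distrib sum_subtractf
        sum_distrib_left)
  have "(\<Sum>i\<in>UNIV. fst u $ i * dvcomp v $ i)
      = (\<Sum>i\<in>UNIV. \<Sum>a\<in>UNIV. \<Sum>j\<in>UNIV. b $ a * Gam (fst z) a i j * fst u $ i * fst v $ j)"
    unfolding dvcomp_def by (simp add: sum_distrib_left algebra_simps)
  also have "\<dots> = Q"
    unfolding Q_def by (subst sum.swap) (simp add: sum_distrib_left algebra_simps)
  finally have Q_left: "(\<Sum>i\<in>UNIV. fst u $ i * dvcomp v $ i) = Q" .
  have "(\<Sum>i\<in>UNIV. dvcomp u $ i * fst v $ i)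
      = (\<Sum>i\<in>UNIV. \<Sum>a\<in>UNIV. \<Sum>j\<in>UNIV. b $ a * Gam (fst z) a i j * fst u $ j * fst v $ i)"
    unfolding dvcomp_def by (simp add: sum_distrib_right)
  also have "\<dots> = (\<Sum>a\<in>UNIV. \<Sum>i\<in>UNIV. \<Sum>j\<in>UNIV. b $ a * Gam (fst z) a i j * fst u $ j * fst v $ i)"
    by (rule sum.swap)
  also have "\<dots> = (\<Sum>a\<in>UNIV. \<Sum>j\<in>UNIV. \<Sum>i\<in>UNIV. b $ a * Gam (fst z) a i j * fst u $ j * fst v $ i)"
    by (rule sum.cong[OF refl], rule sum.swap)
  also have "\<dots> = Q"
    unfolding Q_def by (simp add: Gam_sym sum_distrib_left algebra_simps)
  finally have Q_right: "(\<Sum>i\<in>UNIV. dvcomp u $ i * fst v $ i) = Q" .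
  have "gbar Gam c (z + t *\<^sub>R (0, b)) u v
      = gbar Gam c z u v - t * (\<Sum>i\<in>UNIV. fst u $ i * dvcomp v $ i)
        - t * (\<Sum>i\<in>UNIV. dvcomp u $ i * fst v $ i)"
    unfolding gbar_def vcomp_line
    by (simp add: hcomp_def algebra_simps sum.distrib sum_subtractf sum_distrib_left)
  then show ?thesis
    unfolding Q_left Q_right Q_def by simp
qed

lemma frechet_derivative_gbar_vertical_direction:
  assumes "\<And>a h j. (\<lambda>x. Gam x a h j) differentiable (at (fst z))"
    and "\<And>i j. (\<lambda>x. c x i j) differentiable (at (fst z))"
    and "\<And>a i j. Gam (fst z) a i j = Gam (fst z) a j i"
  shows "frechet_derivative (\<lambda>w. gbar Gam c w u v) (at z) (0, b)
    = - 2 * (\<Sum>a\<in>UNIV. b $ a * (\<Sum>i\<in>UNIV. \<Sum>j\<in>UNIV. Gam (fst z) a i j * fst u $ i * fst v $ j))"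
  using differentiable_gbar[where Gam=Gam and c=c and z=z, OF assms(1,2)]
    gbar_along_vertical_line[where Gam=Gam and z=z, OF assms(3)]
  by (rule frechet_derivative_along_affine_line)

context
  fixes W :: "'n::finite cpt set"
    and Gam :: "real^'n \<Rightarrow> 'n \<Rightarrow> 'n \<Rightarrow> 'n \<Rightarrow> real"
    and c :: "real^'n \<Rightarrow> 'n \<Rightarrow> 'n \<Rightarrow> real"
    and LC :: "'n cpt \<Rightarrow> 'n cpt \<Rightarrow> 'n cpt \<Rightarrow> 'n cpt"
    and z :: "'n cpt"
  assumes LC: "levi_civita W (gbar Gam c) LC" and z: "z \<in> W"
    and Gam_diff: "\<And>a h j. (\<lambda>x. Gam x a h j) differentiable (at (fst z))"
    and c_diff: "\<And>i j. (\<lambda>x. c x i j) differentiable (at (fst z))"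
    and Gam_sym: "\<And>a i j. Gam (fst z) a i j = Gam (fst z) a j i"
    and c_sym: "\<And>i j. c (fst z) i j = c (fst z) j i"
begin

lemma gbar_koszul:
  "2 * gbar Gam c z (LC z u v) w
    = frechet_derivative (\<lambda>y. gbar Gam c y v w) (at z) u
      + frechet_derivative (\<lambda>y. gbar Gam c y u w) (at z) v
      - frechet_derivative (\<lambda>y. gbar Gam c y u v) (at z) w"
  using LC z gbar_symmetric[where c=c and z=z and Gam=Gam, OF c_sym] by (rule levi_civita_koszul)

lemma levi_civita_gbar_fst:
  "fst (LC z u v) = (\<chi> k. \<Sum>i\<in>UNIV. \<Sum>j\<in>UNIV. Gam (fst z) k i j * fst u $ i * fst v $ j)"
proof -
  have "2 * fst (LC z u v) $ k = 2 * gbar Gam c z (LC z u v) (0, axis k 1)" for k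
    by (simp add: gbar_horizontal_vertical)
  also have "\<dots> k = - frechet_derivative (\<lambda>w. gbar Gam c w u v) (at z) (0, axis k 1)" for k
    unfolding gbar_koszul by (simp add: frechet_derivative_gbar_vertical_arg)
  finally show ?thesis
    by (simp add: vec_eq_iff
        frechet_derivative_gbar_vertical_direction[where Gam=Gam and c=c and z=z,
          OF Gam_diff c_diff Gam_sym])
qed

lemma levi_civita_gbar_vertical:
  "LC z u (0, b) = (0, \<chi> k. - (\<Sum>a\<in>UNIV. b $ a * (\<Sum>i\<in>UNIV. Gam (fst z) a i k * fst u $ i)))"
proof -
  have fst_LC: "fst (LC z u (0, b)) = 0"
    by (simp add: levi_civita_gbar_fst vec_eq_iff)
  have "2 * snd (LC z u (0, b)) $ k = 2 * gbar Gam c z (LC z u (0, b)) (axis k 1, 0)" for k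
    by (simp add: gbar_vertical_horizontal fst_LC)
  also have "\<dots> k = frechet_derivative (\<lambda>w. gbar Gam c w u (axis k 1, 0)) (at z) (0, b)" for k
    unfolding gbar_koszul by (simp add: frechet_derivative_gbar_vertical_arg)
  finally show ?thesis
    using fst_LC
    by (simp add: prod_eq_iff vec_eq_iff
        frechet_derivative_gbar_vertical_direction[where Gam=Gam and c=c and z=z,
          OF Gam_diff c_diff Gam_sym])
qed

lemma svk_levi_civita_adapted_frame:
  shows "svk Gam LC (Eh Gam i) (Eh Gam j) z = (\<Sum>h\<in>UNIV. Gam (fst z) h i j *\<^sub>R Eh Gam h z)"
    and "svk Gam LC (Eh Gam i) (Ev j) z = - (\<Sum>h\<in>UNIV. Gam (fst z) j i h *\<^sub>R Ev h z)"
    and "svk Gam LC (Ev i) (Eh Gam j) z = 0"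
    and "svk Gam LC (Ev i) (Ev j) z = 0"
proof -
  have "bilinear (LC z)"
    using LC z unfolding levi_civita_def lin_conn_def by blast
  then have conn_zero: "conn LC X (\<lambda>_. 0) z = 0" for X
    by (simp add: conn_def bilinear_rzero)
  have fields: "(\<lambda>w. Hproj Gam w (Eh Gam j w)) = Eh Gam j"
    "(\<lambda>w. Vproj Gam w (Eh Gam j w)) = (\<lambda>_. 0)"
    "(\<lambda>w. Hproj Gam w (Ev j w)) = (\<lambda>_. 0)" "(\<lambda>w. Vproj Gam w (Ev j w)) = Ev j" for j
    by (simp_all add: fun_eq_iff Hproj_Eh Vproj_Eh Hproj_Ev Vproj_Ev)
  have conn_Eh: "fst (conn LC X (Eh Gam j) z) = fst (LC z (X z) (Eh Gam j z))" for X j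
    using frechet_derivative_at[OF has_derivative_Eh[of Gam z, OF Gam_diff], symmetric]
    by (simp add: conn_def Hproj_deriv_def)
  have conn_Ev: "conn LC X (Ev j) z = LC z (X z) (Ev j z)" for X j
    by (simp add: conn_def frechet_derivative_at[OF has_derivative_Ev, symmetric])
  have Hproj_z: "Hproj Gam z x = (\<Sum>h\<in>UNIV. fst x $ h *\<^sub>R Eh Gam h z)" for x
    by (simp add: Hproj_def hcomp_def)
  have Vproj_z0: "Vproj Gam z 0 = 0" and Hproj_z0: "Hproj Gam z 0 = 0"
    by (simp_all add: Vproj_vertical Hproj_vertical)
  show "svk Gam LC (Eh Gam i) (Eh Gam j) z = (\<Sum>h\<in>UNIV. Gam (fst z) h i j *\<^sub>R Eh Gam h z)"
    unfolding svk_def fields conn_zero Vproj_z0 Hproj_z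
    by (simp add: conn_Eh levi_civita_gbar_fst)
  show "svk Gam LC (Eh Gam i) (Ev j) z = - (\<Sum>h\<in>UNIV. Gam (fst z) j i h *\<^sub>R Ev h z)"
    unfolding svk_def fields conn_zero Hproj_z0 conn_Ev
    by (simp add: levi_civita_gbar_vertical Vproj_vertical Ev_def prod_eq_iff fst_sum snd_sum
        vec_lambda_eq_sum_axis[symmetric] vec_eq_iff)
  show "svk Gam LC (Ev i) (Eh Gam j) z = 0"
    unfolding svk_def fields conn_zero Vproj_z0
    by (simp add: Hproj_vertical conn_Eh levi_civita_gbar_fst vec_eq_iff)
  show "svk Gam LC (Ev i) (Ev j) z = 0"
    unfolding svk_def fields conn_zero Hproj_z0 conn_Ev
    by (simp add: Ev_def levi_civita_gbar_vertical Vproj_vertical prod_eq_iff vec_eq_iff)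
qed

end

theorem proposition5:
  fixes U :: "(real^'n) set"
    and Gam :: "real^'n \<Rightarrow> 'n \<Rightarrow> 'n \<Rightarrow> 'n \<Rightarrow> real"
    and c :: "real^'n \<Rightarrow> 'n \<Rightarrow> 'n \<Rightarrow> real"
    and LC HL :: "'n cpt \<Rightarrow> 'n cpt \<Rightarrow> 'n cpt \<Rightarrow> 'n cpt"
  assumes "open U"
    and "\<And>h i j. smooth_on U (\<lambda>x. Gam x h i j)"
    and "\<And>i j. smooth_on U (\<lambda>x. c x i j)"
    and "\<And>x h i j. x \<in> U \<Longrightarrow> Gam x h i j = Gam x h j i"
    and "\<And>x i j. x \<in> U \<Longrightarrow> c x i j = c x j i"
    and "levi_civita (U \<times> UNIV) (gbar Gam c) LC"
    and "horizontal_lift (U \<times> UNIV) Gam HL"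
  shows "\<forall>X Y. smooth_on (U \<times> UNIV) X \<longrightarrow> smooth_on (U \<times> UNIV) Y \<longrightarrow>
           (\<forall>z\<in>U \<times> UNIV. svk Gam LC X Y z = conn HL X Y z)"
proof (intro allI impI ballI)
  fix X Y :: "'n cpt \<Rightarrow> 'n cpt" and z :: "'n cpt"
  assume Y: "smooth_on (U \<times> UNIV) Y" and z: "z \<in> U \<times> UNIV"
  have x: "fst z \<in> U"
    using z by auto
  have Gam_diff: "\<And>a h j. (\<lambda>x. Gam x a h j) differentiable (at (fst z))"
    and c_diff: "\<And>i j. (\<lambda>x. c x i j) differentiable (at (fst z))"
    using assms(1-3) x by (blast intro: smooth_on_imp_differentiable)+
  note LC_frame =
    svk_levi_civita_adapted_frame[OF assms(6) z Gam_diff c_diff assms(4)[OF x] assms(5)[OF x]]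
  have "Y differentiable (at z)"
    using smooth_on_imp_differentiable[OF Y _ z] assms(1) by (simp add: open_Times)
  then have Y_diff: "(Y has_derivative frechet_derivative Y (at z)) (at z)"
    by (simp add: frechet_derivative_works[symmetric])
  show "svk Gam LC X Y z = conn HL X Y z"
  proof (rule svk_eq_conn_of_adapted_frame[OF Gam_diff _ _ _ Y_diff])
    show "bilinear (LC z)" and "bilinear (HL z)"
      using assms(6,7) z unfolding levi_civita_def horizontal_lift_def lin_conn_def by blast+
    show "svk Gam LC F G z = conn HL F G z"
      if "F \<in> adapted_frame Gam" and "G \<in> adapted_frame Gam" for F G
      using that LC_frame assms(7) z unfolding horizontal_lift_def adapted_frame_def by auto
  qed
qed

end
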